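(* Under the standing assumptions, let $t$ be a task of type 2 with intermediate task $i$ with respect to a demand vector $\vec v$, and suppose $\vec v$ has at least one unit of demand in each of two tasks $s_1,s_2$, both distinct from $t$ and $i$. Let $\vec v'$ be the demand vector such that $(\vec v,\vec v')$ is $(i,t)$-adjacent. Then $(\vec v,\vec v')$ has switching cost $1$.
   Context: Standing assumptions: $n\ge 4$, $k\ge 5$, and $f_1,\dots,f_n$ are functions from demand vectors to $[k]$ satisfying the demand (for every demand vector $\vec v$ and task $j$, exactly $v_j$ agents $a$ have $f_a(\vec v)=j$), with maximum switching cost at most $2$. A demand vector is $\vec v=(v_1,\dots,v_k)$ of non-negative integers with $\sum v_j=n$; task $j$ is non-empty in $\vec v$ if $v_j\ge1$. The switching cost of $(\vec v,\vec v')$ is the number of agents $a$ with $f_a(\vec v)\ne f_a(\vec v')$; $\vec v,\vec v'$ are adjacent if $\|\vec v-\vec v'\|_1=2$. An ordered pair $(\vec v_1,\vec v_2)$ is $(s,t)$-adjacent if $s\ne t$ and $\vec v_2$ is obtained from $\vec v_1$ by moving one unit of demand from task $s$ to task $t$. Agent $a$ is $(i,j)$-mobile with respect to $(\vec v_1,\vec v_2)$ if $f_a(\vec v_1)=i$, $f_a(\vec v_2)=j$, $i\ne j$. If $(\vec v_1,\vec v_2)$ is $(s,t)$-adjacent with switching cost $2$, then there is a task $i\notin\{s,t\}$ such that one switching agent is $(s,i)$-mobile and the other is $(i,t)$-mobile; $i$ is called the intermediate task of $(\vec v_1,\vec v_2)$. A task $t$ is of type 1 with respect to $\vec v$ if for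 every task $s\ne t$ non-empty in $\vec v$, the $(s,t)$-adjacent pair starting at $\vec v$ has switching cost $1$. A task $t$ is of type 2 with respect to $\vec v$ if there exist a task $i$ and an agent $a$ such that for every task $s\notin\{i,t\}$ non-empty in $\vec v$, the $(s,t)$-adjacent pair starting at $\vec v$ has switching cost $2$, intermediate task $i$, and $(i,t)$-mobile agent $a$; then $i$ is the intermediate task of $t$ with respect to $\vec v$. *)

theory Defs
  imports Main
begin

(* Agents are 1..n, tasks are 1..k.  A demand vector is a function nat => nat
   that vanishes outside the task set {1..k} and sums to n. *)

definition demand_vec :: "nat \<Rightarrow> nat \<Rightarrow> (nat \<Rightarrow> nat) \<Rightarrow> bool" where
  "demand_vec n k v \<longleftrightarrow> (\<forall>j. j \<notin> {1..k} \<longrightarrow> v j = 0) \<and> (\<Sum>j\<in>{1..k}. v j) = n"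

(* f a v is the task assigned to agent a under demand vector v *)
definition satisfies_demand ::
  "nat \<Rightarrow> nat \<Rightarrow> (nat \<Rightarrow> (nat \<Rightarrow> nat) \<Rightarrow> nat) \<Rightarrow> bool" where
  "satisfies_demand n k f \<longleftrightarrow>
     (\<forall>v. demand_vec n k v \<longrightarrow>
        (\<forall>a\<in>{1..n}. f a v \<in> {1..k}) \<and>
        (\<forall>j\<in>{1..k}. card {a\<in>{1..n}. f a v = j} = v j))"

definition switching_cost ::
  "nat \<Rightarrow> (nat \<Rightarrow> (nat \<Rightarrow> nat) \<Rightarrow> nat) \<Rightarrow> (nat \<Rightarrow> nat) \<Rightarrow> (nat \<Rightarrow> nat) \<Rightarrow> nat" where
  "switching_cost n f v v' = card {a\<in>{1..n}. f a v \<noteq> f a v'}"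

definition adjacent :: "nat \<Rightarrow> (nat \<Rightarrow> nat) \<Rightarrow> (nat \<Rightarrow> nat) \<Rightarrow> bool" where
  "adjacent k v v' \<longleftrightarrow> (\<Sum>j\<in>{1..k}. \<bar>int (v j) - int (v' j)\<bar>) = 2"

definition max_switching_cost_le ::
  "nat \<Rightarrow> nat \<Rightarrow> (nat \<Rightarrow> (nat \<Rightarrow> nat) \<Rightarrow> nat) \<Rightarrow> nat \<Rightarrow> bool" where
  "max_switching_cost_le n k f c \<longleftrightarrow>
     (\<forall>v v'. demand_vec n k v \<and> demand_vec n k v' \<and> adjacent k v v' \<longrightarrow>
        switching_cost n f v v' \<le> c)"

definition move :: "nat \<Rightarrow> nat \<Rightarrow> (nat \<Rightarrow> nat) \<Rightarrow> (nat \<Rightarrow> nat)" where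
  "move s t v = v(s := v s - 1, t := v t + 1)"

definition st_adjacent :: "nat \<Rightarrow> nat \<Rightarrow> (nat \<Rightarrow> nat) \<Rightarrow> (nat \<Rightarrow> nat) \<Rightarrow> bool" where
  "st_adjacent s t v1 v2 \<longleftrightarrow> s \<noteq> t \<and> v1 s \<ge> 1 \<and> v2 = move s t v1"

definition mobile ::
  "(nat \<Rightarrow> (nat \<Rightarrow> nat) \<Rightarrow> nat) \<Rightarrow> nat \<Rightarrow> nat \<Rightarrow> nat \<Rightarrow> (nat \<Rightarrow> nat) \<Rightarrow> (nat \<Rightarrow> nat) \<Rightarrow> bool" where
  "mobile f a i j v1 v2 \<longleftrightarrow> f a v1 = i \<and> f a v2 = j \<and> i \<noteq> j"

definition intermediate_task ::
  "nat \<Rightarrow> (nat \<Rightarrow> (nat \<Rightarrow> nat) \<Rightarrow> nat) \<Rightarrow> nat \<Rightarrow> nat \<Rightarrow> nat \<Rightarrow> (nat \<Rightarrow> nat) \<Rightarrow> (nat \<Rightarrow> nat) \<Rightarrow> bool" where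
  "intermediate_task n f s t i v1 v2 \<longleftrightarrow> i \<notin> {s, t} \<and>
     (\<exists>a\<in>{1..n}. \<exists>b\<in>{1..n}. a \<noteq> b \<and> mobile f a s i v1 v2 \<and> mobile f b i t v1 v2)"

definition type2_with ::
  "nat \<Rightarrow> nat \<Rightarrow> (nat \<Rightarrow> (nat \<Rightarrow> nat) \<Rightarrow> nat) \<Rightarrow> nat \<Rightarrow> nat \<Rightarrow> (nat \<Rightarrow> nat) \<Rightarrow> bool" where
  "type2_with n k f t i v \<longleftrightarrow> (\<exists>a\<in>{1..n}. \<forall>s\<in>{1..k}. s \<notin> {i, t} \<and> v s \<ge> 1 \<longrightarrow>
      switching_cost n f v (move s t v) = 2 \<and>
      intermediate_task n f s t i v (move s t v) \<and>
      mobile f a i t v (move s t v))"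

end

theory Submission imports Defs begin

text \<open>Let \<open>v' = move i t v\<close>. The switching cost of \<open>(v, v')\<close> is at most 2 and is not 0, since
  task \<open>t\<close> gains demand. If it were 2, the pair would have an intermediate task \<open>j\<close>: an agent
  goes \<open>i \<rightarrow> j\<close> and another \<open>j \<rightarrow> t\<close>. For each \<open>s \<in> {s1, s2}\<close>, type 2 says that \<open>move s t v\<close> is
  reached from \<open>v\<close> by one agent going \<open>s \<rightarrow> i\<close> and one going \<open>i \<rightarrow> t\<close>. The vectors \<open>move s t v\<close>
  and \<open>v'\<close> are adjacent, yet unless \<open>j = s\<close> at least three agents differ between them. Hence
  \<open>s1 = j = s2\<close>, a contradiction.\<close>

lemma demand_vec_move:
  assumes "demand_vec n k v" "s \<in> {1..k}" "t \<in> {1..k}" "s \<noteq> t" "v s \<ge> 1"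
  shows "demand_vec n k (move s t v)"
proof -
  have "(\<Sum>j\<in>{1..k}. int (move s t v j))
      = (\<Sum>j\<in>{1..k}. int (v j) + of_bool (j = t) - of_bool (j = s))"
    using assms by (intro sum.cong) (auto simp: move_def)
  also have "\<dots> = (\<Sum>j\<in>{1..k}. int (v j))"
    using assms(2,3) by (simp add: sum.distrib sum_subtractf)
  finally have "(\<Sum>j\<in>{1..k}. move s t v j) = (\<Sum>j\<in>{1..k}. v j)"
    by (simp only: of_nat_sum [symmetric] of_nat_eq_iff)
  then show ?thesis
    using assms by (auto simp: demand_vec_def move_def)
qed

lemma adjacentI_two_units:
  assumes "p \<in> {1..k}" "q \<in> {1..k}" "p \<noteq> q"
    and "\<And>j. \<bar>int (x j) - int (y j)\<bar> = of_bool (j = p) + of_bool (j = q)"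
  shows "adjacent k x y"
  using assms by (simp add: adjacent_def sum.distrib)

lemma adjacent_move:
  assumes "s \<in> {1..k}" "t \<in> {1..k}" "s \<noteq> t" "v s \<ge> 1"
  shows "adjacent k v (move s t v)"
  by (rule adjacentI_two_units[OF assms(1-3)]) (use assms in \<open>auto simp: move_def\<close>)

lemma adjacent_move_move:
  assumes "s \<in> {1..k}" "i \<in> {1..k}" "s \<noteq> i" "s \<noteq> t" "i \<noteq> t" "v s \<ge> 1" "v i \<ge> 1"
  shows "adjacent k (move s t v) (move i t v)"
  by (rule adjacentI_two_units[OF assms(1-3)]) (use assms in \<open>auto simp: move_def\<close>)

lemma card_assigned_eq_demand:
  assumes "satisfies_demand n k f" "demand_vec n k v"
  shows "card {a\<in>{1..n}. f a v = j} = v j"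
proof (cases "j \<in> {1..k}")
  case False
  then have "{a\<in>{1..n}. f a v = j} = {}"
    using assms unfolding satisfies_demand_def by fastforce
  then show ?thesis
    using False assms(2) by (simp add: demand_vec_def)
qed (use assms in \<open>simp add: satisfies_demand_def\<close>)

text \<open>Agents that keep their task contribute equally to both vectors, so the change of demand
  at each task is the net flow of the switching agents.\<close>

lemma demand_diff_eq_switching_flow:
  assumes "satisfies_demand n k f" "demand_vec n k v" "demand_vec n k w"
  defines "D \<equiv> {a\<in>{1..n}. f a v \<noteq> f a w}"
  shows "int (v j) - int (w j) = int (card {a\<in>D. f a v = j}) - int (card {a\<in>D. f a w = j})"
proof -
  let ?S = "{a\<in>{1..n}. f a v = j \<and> f a w = j}"
  have split_v: "{a\<in>{1..n}. f a v = j} = {a\<in>D. f a v = j} \<union> ?S"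
   and split_w: "{a\<in>{1..n}. f a w = j} = {a\<in>D. f a w = j} \<union> ?S"
    unfolding D_def by auto
  have "v j = card ({a\<in>D. f a v = j} \<union> ?S)"
    using card_assigned_eq_demand[OF assms(1,2), of j] split_v by simp
  also have "\<dots> = card {a\<in>D. f a v = j} + card ?S"
    by (rule card_Un_disjoint) (auto simp: D_def)
  finally have v_eq: "v j = card {a\<in>D. f a v = j} + card ?S" .
  have "w j = card ({a\<in>D. f a w = j} \<union> ?S)"
    using card_assigned_eq_demand[OF assms(1,3), of j] split_w by simp
  also have "\<dots> = card {a\<in>D. f a w = j} + card ?S"
    by (rule card_Un_disjoint) (auto simp: D_def)
  finally show ?thesis
    using v_eq by simp
qed

lemma demand_eq_if_switching_cost_zero:
  assumes "satisfies_demand n k f" "demand_vec n k v" "demand_vec n k w"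
    and "switching_cost n f v w = 0"
  shows "v = w"
proof
  fix j
  have no_switch: "{a\<in>{1..n}. f a v \<noteq> f a w} = {}"
    using assms(4) by (simp add: switching_cost_def)
  show "v j = w j"
    using demand_diff_eq_switching_flow[OF assms(1-3), of j] unfolding no_switch by simp
qed

lemma switching_set_eq_pair:
  assumes "switching_cost n f v w = 2" "a \<in> {1..n}" "b \<in> {1..n}" "a \<noteq> b"
    and "f a v \<noteq> f a w" "f b v \<noteq> f b w"
  shows "{z\<in>{1..n}. f z v \<noteq> f z w} = {a, b}"
  using assms
  by (intro card_subset_eq [symmetric]) (auto simp: switching_cost_def)

lemma two_switch_flow_cases:
  fixes p p' q q' s t :: 'a
  assumes "p \<noteq> p'" "q \<noteq> q'" "s \<noteq> t"
    and flow: "\<And>j. (if j = s then 1 else 0) - (if j = t then 1 else 0) =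
       (if p = j then 1 else 0) + (if q = j then 1 else 0)
       - (if p' = j then 1 else 0) - (if q' = j then 1 else (0::int))"
  shows "(p = s \<and> p' = q \<and> q' = t \<and> q \<notin> {s, t}) \<or> (q = s \<and> q' = p \<and> p' = t \<and> p \<notin> {s, t})"
proof (cases "q' = t")
  case True
  then have "p' \<noteq> t" using flow[of t] assms(1-3) by (auto split: if_splits)
  then show ?thesis
    using True flow[of p] flow[of q] flow[of s] flow[of p'] assms(1-3) by (auto split: if_splits)
next
  case False
  then have "p' = t" using flow[of t] assms(1-3) by (auto split: if_splits)
  then show ?thesis
    using False flow[of p] flow[of q] flow[of s] flow[of q'] assms(1-3) by (auto split: if_splits)
qed

lemma intermediate_taskI:
  assumes "a \<in> {1..n}" "b \<in> {1..n}" "a \<noteq> b"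
    and "f a v = s" "f a w = i" "f b v = i" "f b w = t" "i \<notin> {s, t}"
  shows "intermediate_task n f s t i v w"
  unfolding intermediate_task_def mobile_def
  using assms by (metis insert_iff)

lemma intermediate_taskE:
  assumes "intermediate_task n f s t i v w"
  obtains a b where "a \<in> {1..n}" "b \<in> {1..n}" "a \<noteq> b"
    "f a v = s" "f a w = i" "f b v = i" "f b w = t" "i \<notin> {s, t}"
  using assms unfolding intermediate_task_def mobile_def by blast

lemma intermediate_task_if_switching_cost_two:
  assumes "satisfies_demand n k f" "demand_vec n k v" "s \<in> {1..k}" "t \<in> {1..k}"
    and "st_adjacent s t v w" and "switching_cost n f v w = 2"
  shows "\<exists>j. intermediate_task n f s t j v w"
proof -
  have st: "s \<noteq> t" and w: "w = move s t v" and "v s \<ge> 1"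
    using assms(5) by (auto simp: st_adjacent_def)
  then have dw: "demand_vec n k w"
    using demand_vec_move[OF assms(2-4)] by simp
  obtain c d where cd: "{a\<in>{1..n}. f a v \<noteq> f a w} = {c, d}" "c \<noteq> d"
    using assms(6) unfolding switching_cost_def card_2_iff by blast
  then have agents: "c \<in> {1..n}" "d \<in> {1..n}" "f c v \<noteq> f c w" "f d v \<noteq> f d w"
    by blast+
  have "(if j = s then 1 else 0) - (if j = t then 1 else 0) =
      (if f c v = j then 1 else 0) + (if f d v = j then 1 else 0)
      - (if f c w = j then 1 else 0) - (if f d w = j then 1 else (0::int))" for j
  proof -
    have card_pair: "int (card {a\<in>{c, d}. P a}) = (if P c then 1 else 0) + (if P d then 1 else 0)" for P
    proof -
      have "{a\<in>{c, d}. P a} = (if P c then {c} else {}) \<union> (if P d then {d} else {})"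
        by auto
      then show ?thesis
        using cd(2) by simp
    qed
    have "int (v j) - int (w j) = (if j = s then 1 else 0) - (if j = t then 1 else 0)"
      using st \<open>v s \<ge> 1\<close> by (auto simp: w move_def)
    moreover have "int (v j) - int (w j) = (if f c v = j then 1 else 0) + (if f d v = j then 1 else 0)
        - ((if f c w = j then 1 else 0) + (if f d w = j then 1 else 0))"
      using demand_diff_eq_switching_flow[OF assms(1,2) dw, of j] unfolding cd(1) card_pair .
    ultimately show ?thesis
      by (simp only: diff_diff_eq)
  qed
  from two_switch_flow_cases[OF agents(3,4) st this] show ?thesis
  proof (elim disjE conjE)
    assume "f c v = s" "f c w = f d v" "f d w = t" "f d v \<notin> {s, t}"
    then show ?thesis
      using intermediate_taskI[OF agents(1,2) cd(2)] by metis
  next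
    assume "f d v = s" "f d w = f c v" "f c w = t" "f c v \<notin> {s, t}"
    then show ?thesis
      using intermediate_taskI[OF agents(2,1) cd(2)[symmetric]] by metis
  qed
qed

lemma switching_cost_move_le:
  assumes "max_switching_cost_le n k f c" "demand_vec n k v"
    and "s \<in> {1..k}" "t \<in> {1..k}" "s \<noteq> t" "v s \<ge> 1"
  shows "switching_cost n f v (move s t v) \<le> c"
  using assms demand_vec_move[OF assms(2-6)] adjacent_move[of s k t v, OF assms(3-6)]
  by (simp add: max_switching_cost_le_def)

lemma switching_cost_move_move_le:
  assumes "max_switching_cost_le n k f c" "demand_vec n k v"
    and "s \<in> {1..k}" "i \<in> {1..k}" "t \<in> {1..k}" "s \<noteq> i" "s \<noteq> t" "i \<noteq> t"
    and "v s \<ge> 1" "v i \<ge> 1"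
  shows "switching_cost n f (move s t v) (move i t v) \<le> c"
  using assms demand_vec_move[OF assms(2,3,5,7,9)] demand_vec_move[OF assms(2,4,5,8,10)]
    adjacent_move_move[OF assms(3,4,6-10)]
  by (simp add: max_switching_cost_le_def)

lemma switching_cost_move_neq_0:
  assumes "satisfies_demand n k f" "demand_vec n k v"
    and "s \<in> {1..k}" "t \<in> {1..k}" "s \<noteq> t" "v s \<ge> 1"
  shows "switching_cost n f v (move s t v) \<noteq> 0"
proof
  assume "switching_cost n f v (move s t v) = 0"
  then have "v t = move s t v t"
    using demand_eq_if_switching_cost_zero[OF assms(1,2) demand_vec_move[OF assms(2-6)]] by simp
  then show False
    using assms(5) by (simp add: move_def)
qed

text \<open>Two ways of moving demand to \<open>t\<close>: \<open>w\<close> by agents \<open>s \<rightarrow> i \<rightarrow> t\<close>, \<open>v'\<close> by agents \<open>i \<rightarrow> j \<rightarrow> t\<close>.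
  Unless \<open>j = s\<close>, the four agents involved comprise at least three distinct ones, all of which
  hold different tasks in \<open>w\<close> and \<open>v'\<close>.\<close>

lemma intermediate_task_eq_source:
  assumes "switching_cost n f v w = 2" "intermediate_task n f s t i v w"
    and "switching_cost n f v v' = 2" "intermediate_task n f i t j v v'"
    and "switching_cost n f w v' \<le> 2"
  shows "j = s"
proof (rule ccontr)
  assume "j \<noteq> s"
  obtain b a where ab: "b \<in> {1..n}" "a \<in> {1..n}" "b \<noteq> a"
      "f b v = s" "f b w = i" "f a v = i" "f a w = t" "i \<notin> {s, t}"
    by (rule intermediate_taskE[OF assms(2)])
  obtain d c where cd: "d \<in> {1..n}" "c \<in> {1..n}" "d \<noteq> c"
      "f d v = i" "f d v' = j" "f c v = j" "f c v' = t" "j \<notin> {i, t}"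
    by (rule intermediate_taskE[OF assms(4)])
  have "{z\<in>{1..n}. f z v \<noteq> f z w} = {a, b}"
    using switching_set_eq_pair[OF assms(1) ab(2,1) ab(3)[symmetric]] ab(4-8) by auto
  then have fixed_w: "f z w = f z v" if "z \<in> {1..n}" "z \<notin> {a, b}" for z
    using that by (metis (mono_tags, lifting) mem_Collect_eq)
  have "{z\<in>{1..n}. f z v \<noteq> f z v'} = {c, d}"
    using switching_set_eq_pair[OF assms(3) cd(2,1) cd(3)[symmetric]] cd(4-8) by auto
  then have fixed_v': "f z v' = f z v" if "z \<in> {1..n}" "z \<notin> {c, d}" for z
    using that by (metis (mono_tags, lifting) mem_Collect_eq)
  have "a \<noteq> c" "b \<noteq> d"
    using ab cd by auto
  have "f a w \<noteq> f a v'"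
    using ab cd fixed_v'[of a] \<open>a \<noteq> c\<close> by (cases "a = d") auto
  moreover have "f b w \<noteq> f b v'"
    using ab cd fixed_v'[of b] \<open>b \<noteq> d\<close> by (cases "b = c") auto
  moreover have "f c w \<noteq> f c v'"
    using ab cd fixed_w[of c] \<open>a \<noteq> c\<close> by (cases "c = b") auto
  moreover have "f d w \<noteq> f d v'"
    using ab cd fixed_w[of d] \<open>b \<noteq> d\<close> by (cases "d = a") auto
  ultimately have "card {a, b, c, d} \<le> switching_cost n f w v'"
    unfolding switching_cost_def using ab cd by (intro card_mono) auto
  moreover have "\<not> (c = b \<and> d = a)"
    using ab cd \<open>j \<noteq> s\<close> by auto
  then have "card {a, b, c, d} \<ge> 3"
    using \<open>a \<noteq> c\<close> \<open>b \<noteq> d\<close> ab(3) by (auto simp: card_insert_if)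
  ultimately show False
    using assms(5) by linarith
qed

theorem lemma4p3:
  fixes n k :: nat and f :: "nat \<Rightarrow> (nat \<Rightarrow> nat) \<Rightarrow> nat"
    and v :: "nat \<Rightarrow> nat" and t i s1 s2 :: nat
  assumes "n \<ge> 4" and "k \<ge> 5"
    and "satisfies_demand n k f"
    and "max_switching_cost_le n k f 2"
    and "demand_vec n k v"
    and "t \<in> {1..k}" and "i \<in> {1..k}"
    and "type2_with n k f t i v"
    and "s1 \<in> {1..k}" and "s2 \<in> {1..k}" and "s1 \<noteq> s2"
    and "s1 \<notin> {t, i}" and "s2 \<notin> {t, i}"
    and "v s1 \<ge> 1" and "v s2 \<ge> 1"
    and "st_adjacent i t v v'"
  shows "switching_cost n f v v' = 1"
proof -
  have it: "i \<noteq> t" and vi: "v i \<ge> 1" and v': "v' = move i t v"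
    using assms(16) by (auto simp: st_adjacent_def)
  have "switching_cost n f v v' \<noteq> 2"
  proof
    assume cost: "switching_cost n f v v' = 2"
    then obtain j where j: "intermediate_task n f i t j v v'"
      using intermediate_task_if_switching_cost_two[OF assms(3,5,7,6,16)] by blast
    have "j = s" if "s \<in> {1..k}" "s \<notin> {t, i}" "v s \<ge> 1" for s
    proof (rule intermediate_task_eq_source[OF _ _ cost j])
      show "switching_cost n f v (move s t v) = 2" "intermediate_task n f s t i v (move s t v)"
        using assms(8) that by (auto simp: type2_with_def)
      show "switching_cost n f (move s t v) v' \<le> 2"
        unfolding v' using switching_cost_move_move_le[OF assms(4,5) that(1) assms(7,6)] that it vi
        by simp
    qed
    then show False
      using assms(9-15) by metis
  qed
  moreover have "switching_cost n f v v' \<le> 2" "switching_cost n f v v' \<noteq> 0"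
    unfolding v' using switching_cost_move_le[OF assms(4,5,7,6) it vi]
      switching_cost_move_neq_0[OF assms(3,5,7,6) it vi] .
  ultimately show ?thesis by linarith
qed

end
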